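(* Assume Assumption A1 and let $I\subset\mathbb{R}$ be a bounded Borel set. Then for every $\varepsilon>0$ there exist $s_\varepsilon\in(0,1/2)$ and $L_\varepsilon\in\mathbb{N}$ such that for all $s\in(0,s_\varepsilon)$, $E\in I$, $L\ge L_\varepsilon$, and $x\in\mathcal{T}_L$ with $\mathrm{dist}(0,x)\ge L_\varepsilon$, $$\ln\mathbb{E}\big[|\langle\delta_0,(H_{\mathcal{T}_L}-E)^{-1}\delta_x\rangle|^s\big]\le\varepsilon\,\mathrm{dist}(0,x)+s\,\mathbb{E}\big[\ln|\langle\delta_0,(H_{\mathcal{T}_L}-E)^{-1}\delta_x\rangle|\big].$$
   Context: $\mathcal{T}$ is the rooted tree in which every vertex has $K\ge2$ neighbors away from the root $0$; $\mathcal{T}_L=\{x:\mathrm{dist}(0,x)\le L\}$. $H_{\mathcal{T}_L}=A+V+B$ on $\ell^2(\mathcal{T}_L)$ with $A$ the adjacency operator, $V$ multiplication by i.i.d. random $\omega_x$, $B$ multiplication by a fixed $b\in\mathbb{R}$ on $\{x:\mathrm{dist}(0,x)=L\}$. Assumption A1: the single-site distribution has a bounded density $\varrho$ with $\int|\omega|^\tau\varrho\,d\omega<\infty$ for some $\tau>0$. *)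

theory Defs
  imports "HOL-Probability.Probability"
begin

text \<open>Vertices of the rooted tree with K children per vertex: words over {0..<K};
  the root 0 is the empty word, the children of x are i # x (i < K),
  and dist(0,x) = length x.\<close>

definition tree_ball :: "nat \<Rightarrow> nat \<Rightarrow> nat list set" where
  "tree_ball K L = {xs. set xs \<subseteq> {..<K} \<and> length xs \<le> L}"

definition tree_adj :: "nat list \<Rightarrow> nat list \<Rightarrow> bool" where
  "tree_adj x y \<longleftrightarrow> (\<exists>i. y = i # x \<or> x = i # y)"

definition tree_dist0 :: "nat list \<Rightarrow> nat" where
  "tree_dist0 x = length x"

definition ham :: "nat \<Rightarrow> nat \<Rightarrow> real \<Rightarrow> (nat list \<Rightarrow> real) \<Rightarrow> (nat list \<Rightarrow> real) \<Rightarrow> nat list \<Rightarrow> real" where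
  "ham K L b \<omega> \<psi> y =
     (\<Sum>z\<in>tree_ball K L. if tree_adj y z then \<psi> z else 0)
     + \<omega> y * \<psi> y + (if tree_dist0 y = L then b * \<psi> y else 0)"

text \<open>Green function  < delta_0, (H - E)^{-1} delta_x >  : the value at the root of the
  unique solution psi (supported on T_L) of (H - E) psi = delta_x.\<close>
definition green :: "nat \<Rightarrow> nat \<Rightarrow> real \<Rightarrow> (nat list \<Rightarrow> real) \<Rightarrow> real \<Rightarrow> nat list \<Rightarrow> real" where
  "green K L b \<omega> E x =
     (THE \<psi>. (\<forall>y. y \<notin> tree_ball K L \<longrightarrow> \<psi> y = 0) \<and>
             (\<forall>y\<in>tree_ball K L. ham K L b \<omega> \<psi> y - E * \<psi> y = (if y = x then 1 else 0))) []"

definition assumption_A1 :: "(real \<Rightarrow> real) \<Rightarrow> bool" where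
  "assumption_A1 \<rho> \<longleftrightarrow>
     \<rho> \<in> borel_measurable borel \<and> (\<forall>t. 0 \<le> \<rho> t) \<and>
     (\<integral>\<^sup>+ t. ennreal (\<rho> t) \<partial>lborel) = 1 \<and>
     (\<exists>C. \<forall>t. \<rho> t \<le> C) \<and>
     (\<exists>\<tau>>0. integrable lborel (\<lambda>t. \<bar>t\<bar> powr \<tau> * \<rho> t))"

definition pot_measure :: "(real \<Rightarrow> real) \<Rightarrow> nat \<Rightarrow> nat \<Rightarrow> (nat list \<Rightarrow> real) measure" where
  "pot_measure \<rho> K L = PiM (tree_ball K L) (\<lambda>_. density lborel (\<lambda>t. ennreal (\<rho> t)))"

end

theory Submission
  imports Defs "HOL-Library.Sublist"
begin

text \<open>Almost surely all denominators of the truncated-subtree resolvents are non-zero, and then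
  the Green function factorises along the path \<open>0 = x_0, ..., x_d = x\<close> as
  \<open>G(0,x) = (-1)^d \<Gamma>_0 ... \<Gamma>_d\<close>, where \<open>\<Gamma>_j\<close> is the diagonal resolvent at \<open>x_j\<close> of the forward
  subtree of \<open>x_j\<close>. Each \<open>\<Gamma>_j\<close> is \<open>1 / (\<omega>(x_j) - c_j)\<close> with \<open>c_j\<close> independent of \<open>\<omega>(x_j)\<close> and of
  the potential at the shallower path vertices, so integrating the path sites out from the root
  downwards with the bounded density gives \<open>E |G|^s \<le> (1 + 2 s (1 + 4 sup \<rho>))^(d+1)\<close>, i.e.
  \<open>ln E |G|^s = O(s d)\<close>. Conversely \<open>-ln |\<Gamma>_j|\<close> is at most \<open>ln (1 + |\<omega>(x_j)|) + ln (1 + |E| + |b|)\<close>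
  plus the sum of \<open>ln (1 + |\<Gamma>|)\<close> over the children of \<open>x_j\<close>, whose expectations are bounded by the
  \<open>\<tau>\<close>-moment and the same density bound, so \<open>E ln |G| \<ge> -O(d)\<close>. Both sides of the claim are
  therefore \<open>O(s d)\<close>, and a small enough \<open>s\<close> works for all \<open>x \<noteq> 0\<close>.\<close>

lemma powr_le_one_plus_sqrt:
  fixes v s :: real
  assumes s: "0 \<le> s" "s \<le> 1/4"
  shows "\<bar>v\<bar> powr s \<le> 1 + 2 * s * \<bar>v\<bar> powr (1/2)"
proof (cases "\<bar>v\<bar> \<le> 1")
  case True
  then have "\<bar>v\<bar> powr s \<le> 1"
    using powr_mono2[of s "\<bar>v\<bar>" 1] s by simp
  moreover have "0 \<le> 2 * s * \<bar>v\<bar> powr (1/2)" using s by simp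
  ultimately show ?thesis by linarith
next
  case False
  define l where "l = ln \<bar>v\<bar>"
  have l0: "0 < l" using False by (simp add: l_def)
  have powr_exp: "\<bar>v\<bar> powr r = exp (r * l)" for r using False by (simp add: powr_def l_def)
  have "exp (s * l) - 1 \<le> s * l * exp (s * l)"
  proof -
    have "1 - s * l \<le> exp (- (s * l))" using exp_ge_add_one_self[of "- (s * l)"] by simp
    then have "(1 - s * l) * exp (s * l) \<le> exp (- (s * l)) * exp (s * l)"
      by (rule mult_right_mono) simp
    then show ?thesis by (simp add: exp_minus field_simps)
  qed
  also have "s * l * exp (s * l) \<le> s * (2 * exp (l / 4)) * exp (l / 4)"
  proof -
    have "exp (s * l) \<le> exp (l / 4)" using s l0 by (simp add: mult_right_mono)
    moreover have "l \<le> 2 * exp (l / 4)"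
    proof -
      have "l / 4 \<le> exp (l / 4 - 1)" using exp_ge_add_one_self[of "l / 4 - 1"] by simp
      also have "\<dots> = exp (l / 4) / exp 1" by (simp add: exp_diff)
      also have "\<dots> \<le> exp (l / 4) / 2"
        using exp_ge_add_one_self[of 1] by (intro divide_left_mono) auto
      finally show ?thesis by simp
    qed
    ultimately show ?thesis using s l0 by (intro mult_mono) auto
  qed
  also have "\<dots> = 2 * s * exp ((1/2) * l)" by (simp add: exp_add[symmetric])
  finally show ?thesis by (simp add: powr_exp)
qed

lemma ln_one_plus_abs_le_sqrt:
  fixes v :: real
  shows "ln (1 + \<bar>v\<bar>) \<le> 2 * \<bar>v\<bar> powr (1/2)"
proof -
  define r where "r = \<bar>v\<bar> powr (1/2)"
  have r0: "0 \<le> r" by (simp add: r_def)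
  have "r * r = \<bar>v\<bar>" unfolding r_def by (simp add: powr_add[symmetric])
  then have "1 + \<bar>v\<bar> \<le> (1 + r) * (1 + r)" using r0 by (simp add: algebra_simps)
  then have "ln (1 + \<bar>v\<bar>) \<le> ln ((1 + r) * (1 + r))" by (simp add: r0)
  also have "\<dots> = 2 * ln (1 + r)" using r0 by (simp add: ln_mult)
  also have "\<dots> \<le> 2 * r" using ln_add_one_self_le_self[OF r0] by simp
  finally show ?thesis by (simp add: r_def)
qed

lemma ln_one_plus_abs_le_powr:
  fixes t \<tau> :: real
  assumes "0 < \<tau>"
  shows "ln (1 + \<bar>t\<bar>) \<le> 1 + \<bar>t\<bar> powr \<tau> / \<tau>"
proof (cases "\<bar>t\<bar> \<le> 1")
  case True
  then have "ln (1 + \<bar>t\<bar>) \<le> ln 2" by simp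
  also have "\<dots> \<le> 1" using ln_2_less_1 by simp
  finally show ?thesis using assms by (smt (verit) divide_nonneg_pos powr_ge_zero)
next
  case False
  have "ln (1 + \<bar>t\<bar>) \<le> ln (2 * \<bar>t\<bar>)" using False by simp
  also have "\<dots> = ln 2 + ln \<bar>t\<bar>" using False by (simp add: ln_mult)
  also have "ln \<bar>t\<bar> = ln (\<bar>t\<bar> powr \<tau>) / \<tau>" using False assms by simp
  also have "ln (\<bar>t\<bar> powr \<tau>) \<le> \<bar>t\<bar> powr \<tau>"
    using False by (intro ln_le_minus_one[THEN order_trans]) auto
  finally show ?thesis using ln_2_less_1 assms by (smt (verit) divide_right_mono)
qed

lemma ln_one_plus_sum_le:
  fixes a :: "'i \<Rightarrow> real"
  assumes "finite A" and nonneg: "\<And>i. 0 \<le> a i"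
  shows "ln (1 + sum a A) \<le> (\<Sum>i\<in>A. ln (1 + a i))"
  using assms(1)
proof (induction A rule: finite_induct)
  case empty
  then show ?case by simp
next
  case (insert z A)
  have "0 \<le> sum a A" using nonneg by (simp add: sum_nonneg)
  then have "1 + sum a (insert z A) \<le> (1 + a z) * (1 + sum a A)"
    using insert nonneg[of z] by (simp add: algebra_simps)
  then have "ln (1 + sum a (insert z A)) \<le> ln ((1 + a z) * (1 + sum a A))"
    by (rule ln_mono) (use nonneg in \<open>simp add: sum_nonneg add_pos_nonneg\<close>)
  also have "\<dots> = ln (1 + a z) + ln (1 + sum a A)"
    using \<open>0 \<le> sum a A\<close> nonneg[of z] by (simp add: ln_mult add_pos_nonneg)
  finally show ?case using insert by simp
qed

lemma nn_integral_inverse_sqrt_le: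
  "(\<integral>\<^sup>+u. ennreal (indicator {-1..1} u * \<bar>1/u\<bar> powr (1/2)) \<partial>lborel) \<le> 4"
proof -
  define h where "h u = ennreal (u powr (-1/2)) * indicator {0..1} u" for u :: real
  have h_meas [measurable]: "h \<in> borel_measurable borel" unfolding h_def by measurable
  have h_int: "(\<integral>\<^sup>+u. h u \<partial>lborel) = 2"
  proof -
    have "((\<lambda>u. u powr (-1/2)) has_integral (1 powr (-1/2 + 1) / (-1/2 + 1))) {0..1::real}"
      by (rule has_integral_powr_from_0) auto
    then have "((\<lambda>u. u powr (-1/2)) has_integral 2) {0..1::real}" by simp
    from nn_integral_has_integral_lebesgue'[OF _ this] show ?thesis by (simp add: h_def)
  qed
  have "ennreal (indicator {-1..1} u * \<bar>1/u\<bar> powr (1/2)) \<le> h u + h (-u)" for u :: real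
  proof -
    have "\<bar>1/u\<bar> powr (1/2) = \<bar>u\<bar> powr (-1/2)"
      by (simp add: powr_minus_divide powr_divide abs_divide)
    then show ?thesis by (cases "0 \<le> u") (auto simp: h_def indicator_def)
  qed
  then have "(\<integral>\<^sup>+u. ennreal (indicator {-1..1} u * \<bar>1/u\<bar> powr (1/2)) \<partial>lborel)
      \<le> (\<integral>\<^sup>+u. h u + h (-u) \<partial>lborel)"
    by (intro nn_integral_mono)
  also have "\<dots> = (\<integral>\<^sup>+u. h u \<partial>lborel) + (\<integral>\<^sup>+u. h (-u) \<partial>lborel)"
    by (rule nn_integral_add) auto
  also have "(\<integral>\<^sup>+u. h (-u) \<partial>lborel) = (\<integral>\<^sup>+u. h u \<partial>lborel)"
    using nn_integral_real_affine[OF h_meas, of "-1" 0] by simp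
  finally show ?thesis using h_int by simp
qed

lemma nn_integral_PiM_mult_le:
  fixes N :: "'a measure" and f g :: "('i \<Rightarrow> 'a) \<Rightarrow> ennreal"
  assumes "prob_space N" and S: "finite S" "i \<in> S"
    and [measurable]: "f \<in> borel_measurable (PiM S (\<lambda>_. N))"
    and [measurable]: "g \<in> borel_measurable (PiM S (\<lambda>_. N))"
    and g_indep: "\<And>x w. g (x(i := w)) = g x"
    and f_bound: "\<And>x. x \<in> space (PiM S (\<lambda>_. N)) \<Longrightarrow> (\<integral>\<^sup>+w. f (x(i := w)) \<partial>N) \<le> C"
  shows "(\<integral>\<^sup>+x. f x * g x \<partial>PiM S (\<lambda>_. N)) \<le> C * (\<integral>\<^sup>+x. g x \<partial>PiM S (\<lambda>_. N))"
proof -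
  interpret prob_space N by fact
  interpret product_sigma_finite "\<lambda>_. N" by standard
  obtain w0 where w0: "w0 \<in> space N" using not_empty by blast
  have PI: "PiM (insert i (S - {i})) (\<lambda>_. N) = PiM S (\<lambda>_. N)" using S by (simp add: insert_absorb)
  have f': "f \<in> borel_measurable (PiM (insert i (S - {i})) (\<lambda>_. N))"
    and g': "g \<in> borel_measurable (PiM (insert i (S - {i})) (\<lambda>_. N))"
    and fg: "(\<lambda>x. f x * g x) \<in> borel_measurable (PiM (insert i (S - {i})) (\<lambda>_. N))"
    unfolding PI by simp_all
  have "(\<integral>\<^sup>+x. f x * g x \<partial>PiM S (\<lambda>_. N)) =
      (\<integral>\<^sup>+z. (\<integral>\<^sup>+y. f (z(i := y)) * g (z(i := y)) \<partial>N) \<partial>PiM (S - {i}) (\<lambda>_. N))"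
    unfolding PI[symmetric] by (rule product_nn_integral_insert) (use S fg in auto)
  also have "\<dots> = (\<integral>\<^sup>+z. (\<integral>\<^sup>+y. f (z(i := y)) \<partial>N) * g z \<partial>PiM (S - {i}) (\<lambda>_. N))"
  proof (rule nn_integral_cong)
    fix z assume z: "z \<in> space (PiM (S - {i}) (\<lambda>_. N))"
    have "(\<lambda>y. f (z(i := y))) \<in> borel_measurable N"
      using measurable_comp[OF measurable_component_update[OF z, of i] f'] by (simp add: comp_def)
    then show "(\<integral>\<^sup>+y. f (z(i := y)) * g (z(i := y)) \<partial>N) = (\<integral>\<^sup>+y. f (z(i := y)) \<partial>N) * g z"
      by (simp add: g_indep nn_integral_multc)
  qed
  also have "\<dots> \<le> (\<integral>\<^sup>+z. C * g z \<partial>PiM (S - {i}) (\<lambda>_. N))"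
  proof (rule nn_integral_mono)
    fix z assume "z \<in> space (PiM (S - {i}) (\<lambda>_. N))"
    then have "z(i := w0) \<in> space (PiM S (\<lambda>_. N))"
      using w0 S by (auto simp: space_PiM PiE_iff extensional_def)
    from f_bound[OF this] have "(\<integral>\<^sup>+y. f (z(i := y)) \<partial>N) \<le> C" by simp
    then show "(\<integral>\<^sup>+y. f (z(i := y)) \<partial>N) * g z \<le> C * g z" by (rule mult_right_mono) simp
  qed
  also have "\<dots> = (\<integral>\<^sup>+z. (\<integral>\<^sup>+y. C * g (z(i := y)) \<partial>N) \<partial>PiM (S - {i}) (\<lambda>_. N))"
    by (simp add: g_indep emeasure_space_1)
  also have "\<dots> = (\<integral>\<^sup>+x. C * g x \<partial>PiM S (\<lambda>_. N))"
    unfolding PI[symmetric] by (rule product_nn_integral_insert[symmetric]) (use S g' in auto)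
  also have "\<dots> = C * (\<integral>\<^sup>+x. g x \<partial>PiM S (\<lambda>_. N))"
    by (rule nn_integral_cmult) simp
  finally show ?thesis .
qed

lemma integrable_nonneg_nn_integral_le:
  assumes [measurable]: "f \<in> borel_measurable M" and nonneg: "\<And>x. 0 \<le> f x"
    and bound: "(\<integral>\<^sup>+x. ennreal (f x) \<partial>M) \<le> ennreal B" and "0 \<le> B"
  shows "integrable M f" and "integral\<^sup>L M f \<le> B"
proof -
  show int: "integrable M f"
    by (rule integrableI_nonneg) (use nonneg bound in \<open>auto simp: top_unique less_top[symmetric] intro: le_less_trans\<close>)
  have "ennreal (integral\<^sup>L M f) = (\<integral>\<^sup>+x. ennreal (f x) \<partial>M)"
    by (rule nn_integral_eq_integral[symmetric]) (use int nonneg in auto)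
  with bound have "ennreal (integral\<^sup>L M f) \<le> ennreal B" by simp
  with \<open>0 \<le> B\<close> show "integral\<^sup>L M f \<le> B" by (simp add: ennreal_le_iff)
qed

lemma integrable_sum_integral_le:
  fixes f :: "'i \<Rightarrow> 'a \<Rightarrow> real" and B :: real
  assumes "finite A" and "\<And>i. i \<in> A \<Longrightarrow> integrable M (f i)"
    and "\<And>i. i \<in> A \<Longrightarrow> integral\<^sup>L M (f i) \<le> B"
  shows "integrable M (\<lambda>x. \<Sum>i\<in>A. f i x)" and "(\<integral>x. (\<Sum>i\<in>A. f i x) \<partial>M) \<le> card A * B"
proof -
  show "integrable M (\<lambda>x. \<Sum>i\<in>A. f i x)" using assms(2) by (rule Bochner_Integration.integrable_sum)
  have "(\<integral>x. (\<Sum>i\<in>A. f i x) \<partial>M) = (\<Sum>i\<in>A. integral\<^sup>L M (f i))"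
    using assms(2) by (rule Bochner_Integration.integral_sum)
  also have "\<dots> \<le> (\<Sum>i\<in>A. B)" using assms(3) by (rule sum_mono)
  finally show "(\<integral>x. (\<Sum>i\<in>A. f i x) \<partial>M) \<le> card A * B" by simp
qed

section \<open>Resolvents of truncated forward subtrees\<close>

text \<open>\<open>subtree_green K b E \<omega> n y\<close> is the diagonal resolvent at \<open>y\<close> of the forward subtree of \<open>y\<close>
  truncated \<open>n\<close> levels below \<open>y\<close>, with the boundary term \<open>b\<close> on its last level; the recursion
  is the Schur complement formula on a tree.\<close>

fun subtree_green :: "nat \<Rightarrow> real \<Rightarrow> real \<Rightarrow> (nat list \<Rightarrow> real) \<Rightarrow> nat \<Rightarrow> nat list \<Rightarrow> real" where
  "subtree_green K b E \<omega> 0 y = 1 / (\<omega> y + b - E)"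
| "subtree_green K b E \<omega> (Suc n) y = 1 / (\<omega> y - E - (\<Sum>i<K. subtree_green K b E \<omega> n (i # y)))"

definition subtree_offset :: "nat \<Rightarrow> real \<Rightarrow> real \<Rightarrow> (nat list \<Rightarrow> real) \<Rightarrow> nat \<Rightarrow> nat list \<Rightarrow> real" where
  "subtree_offset K b E \<omega> n y =
     (case n of 0 \<Rightarrow> E - b | Suc m \<Rightarrow> E + (\<Sum>i<K. subtree_green K b E \<omega> m (i # y)))"

definition subtree_denom :: "nat \<Rightarrow> real \<Rightarrow> real \<Rightarrow> (nat list \<Rightarrow> real) \<Rightarrow> nat \<Rightarrow> nat list \<Rightarrow> real" where
  "subtree_denom K b E \<omega> n y = \<omega> y - subtree_offset K b E \<omega> n y"

lemma subtree_green_eq_inverse_denom: "subtree_green K b E \<omega> n y = 1 / subtree_denom K b E \<omega> n y"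
  by (cases n) (simp_all add: subtree_denom_def subtree_offset_def algebra_simps)

lemma subtree_green_local:
  assumes "\<And>p. \<omega> (p @ y) = \<omega>' (p @ y)"
  shows "subtree_green K b E \<omega> n y = subtree_green K b E \<omega>' n y"
  using assms
proof (induction n arbitrary: y)
  case 0
  then show ?case using "0"[of "[]"] by simp
next
  case (Suc n)
  have "subtree_green K b E \<omega> n (i # y) = subtree_green K b E \<omega>' n (i # y)" for i
    by (rule Suc.IH) (metis Suc.prems append.assoc append_Cons append_Nil)
  then show ?case using Suc.prems[of "[]"] by simp
qed

lemma subtree_green_upd_shorter:
  "length z < length y \<Longrightarrow> subtree_green K b E (\<omega> (z := w)) n y = subtree_green K b E \<omega> n y"
  by (rule subtree_green_local) auto

lemma subtree_offset_upd_self: "subtree_offset K b E (\<omega> (y := w)) n y = subtree_offset K b E \<omega> n y"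
  by (cases n) (simp_all add: subtree_offset_def subtree_green_upd_shorter)

lemma subtree_denom_upd_self: "subtree_denom K b E (\<omega> (y := w)) n y = w - subtree_offset K b E \<omega> n y"
  by (simp add: subtree_denom_def subtree_offset_upd_self)

lemma subtree_green_upd_self: "subtree_green K b E (\<omega> (y := w)) n y = 1 / (w - subtree_offset K b E \<omega> n y)"
  by (simp add: subtree_green_eq_inverse_denom subtree_denom_upd_self)

lemma subtree_denom_expand:
  assumes "length y \<le> L"
  shows "subtree_denom K b E \<omega> (L - length y) y =
    \<omega> y - E + (if length y = L then b else 0)
    - (if length y < L then \<Sum>i<K. subtree_green K b E \<omega> (L - length (i # y)) (i # y) else 0)"
proof (cases "length y < L")
  case True
  then obtain m where "L - length y = Suc m" "L - Suc (length y) = m"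
    by (metis Suc_diff_Suc)
  with True show ?thesis by (simp add: subtree_denom_def subtree_offset_def)
next
  case False
  with assms show ?thesis by (simp add: subtree_denom_def subtree_offset_def)
qed

definition nonsingular :: "nat \<Rightarrow> nat \<Rightarrow> real \<Rightarrow> real \<Rightarrow> (nat list \<Rightarrow> real) \<Rightarrow> bool" where
  "nonsingular K L b E \<omega> \<longleftrightarrow> (\<forall>y\<in>tree_ball K L. subtree_denom K b E \<omega> (L - length y) y \<noteq> 0)"

lemma nonsingular_green_mult_denom:
  "nonsingular K L b E \<omega> \<Longrightarrow> y \<in> tree_ball K L \<Longrightarrow>
    subtree_green K b E \<omega> (L - length y) y * subtree_denom K b E \<omega> (L - length y) y = 1"
  by (simp add: nonsingular_def subtree_green_eq_inverse_denom)

definition child_log_sum :: "nat \<Rightarrow> real \<Rightarrow> real \<Rightarrow> (nat list \<Rightarrow> real) \<Rightarrow> nat \<Rightarrow> nat list \<Rightarrow> real" where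
  "child_log_sum K b E \<omega> n y =
     (case n of 0 \<Rightarrow> 0 | Suc m \<Rightarrow> \<Sum>i<K. ln (1 + \<bar>subtree_green K b E \<omega> m (i # y)\<bar>))"

lemma abs_subtree_denom_le:
  "\<bar>subtree_denom K b E \<omega> n y\<bar> \<le> \<bar>\<omega> y\<bar> + (\<bar>E\<bar> + \<bar>b\<bar>)
     + (case n of 0 \<Rightarrow> 0 | Suc m \<Rightarrow> \<Sum>i<K. \<bar>subtree_green K b E \<omega> m (i # y)\<bar>)"
proof (cases n)
  case 0
  then show ?thesis by (simp add: subtree_denom_def subtree_offset_def)
next
  case (Suc m)
  define S where "S = (\<Sum>i<K. subtree_green K b E \<omega> m (i # y))"
  have "\<bar>S\<bar> \<le> (\<Sum>i<K. \<bar>subtree_green K b E \<omega> m (i # y)\<bar>)"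
    unfolding S_def by (rule sum_abs)
  moreover have "\<bar>\<omega> y - (E + S)\<bar> \<le> \<bar>\<omega> y\<bar> + \<bar>E\<bar> + \<bar>S\<bar>"
    using abs_triangle_ineq4[of "\<omega> y" "E + S"] abs_triangle_ineq[of E S] by linarith
  ultimately have "\<bar>\<omega> y - (E + S)\<bar> \<le> \<bar>\<omega> y\<bar> + (\<bar>E\<bar> + \<bar>b\<bar>) + (\<Sum>i<K. \<bar>subtree_green K b E \<omega> m (i # y)\<bar>)"
    using abs_ge_zero[of b] by linarith
  then show ?thesis using Suc by (simp add: subtree_denom_def subtree_offset_def S_def)
qed

lemma ln_abs_subtree_green_ge:
  assumes "subtree_denom K b E \<omega> n y \<noteq> 0"
  shows "- (ln (1 + \<bar>\<omega> y\<bar>) + ln (1 + (\<bar>E\<bar> + \<bar>b\<bar>)) + child_log_sum K b E \<omega> n y)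
    \<le> ln \<bar>subtree_green K b E \<omega> n y\<bar>"
proof -
  define u where "u = \<bar>\<omega> y\<bar>"
  define v where "v = \<bar>E\<bar> + \<bar>b\<bar>"
  define c where "c = (case n of 0 \<Rightarrow> 0 | Suc m \<Rightarrow> \<Sum>i<K. \<bar>subtree_green K b E \<omega> m (i # y)\<bar>)"
  have "0 \<le> c" by (cases n) (auto simp: c_def intro: sum_nonneg)
  then have nonneg: "0 \<le> u" "0 \<le> v" "0 \<le> c" by (simp_all add: u_def v_def)
  have "ln (1 + c) \<le> child_log_sum K b E \<omega> n y"
    by (cases n) (simp_all add: c_def child_log_sum_def ln_one_plus_sum_le)
  have "1 + \<bar>subtree_denom K b E \<omega> n y\<bar> \<le> (1 + u) * (1 + v) * (1 + c)"
    using abs_subtree_denom_le[of K b E \<omega> n y] nonneg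
    by (simp add: u_def v_def c_def algebra_simps) (smt (verit) mult_nonneg_nonneg)
  then have "ln (1 + \<bar>subtree_denom K b E \<omega> n y\<bar>) \<le> ln ((1 + u) * (1 + v) * (1 + c))"
    by (rule ln_mono) simp
  also have "\<dots> = ln (1 + u) + ln (1 + v) + ln (1 + c)"
    using nonneg by (simp add: ln_mult add_pos_nonneg)
  finally have "ln \<bar>subtree_denom K b E \<omega> n y\<bar> \<le> ln (1 + u) + ln (1 + v) + ln (1 + c)"
    using assms by (smt (verit) ln_mono zero_less_abs_iff)
  moreover have "ln \<bar>subtree_green K b E \<omega> n y\<bar> = - ln \<bar>subtree_denom K b E \<omega> n y\<bar>"
    using assms by (simp add: subtree_green_eq_inverse_denom ln_div)
  ultimately show ?thesis
    using \<open>ln (1 + c) \<le> child_log_sum K b E \<omega> n y\<close> by (simp add: u_def v_def)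
qed

section \<open>The Green function as a product along the path\<close>

lemma finite_tree_ball: "finite (tree_ball K L)"
  using finite_lists_length_le[of "{..<K}" L] by (simp add: tree_ball_def)

lemma length_le_tree_ball: "y \<in> tree_ball K L \<Longrightarrow> length y \<le> L"
  by (simp add: tree_ball_def)

lemma Cons_in_tree_ball: "y \<in> tree_ball K L \<Longrightarrow> length y < L \<Longrightarrow> i < K \<Longrightarrow> i # y \<in> tree_ball K L"
  by (auto simp: tree_ball_def)

lemma suffix_in_tree_ball: "suffix y x \<Longrightarrow> x \<in> tree_ball K L \<Longrightarrow> y \<in> tree_ball K L"
  by (auto simp: tree_ball_def suffix_def)

lemma sum_tree_adj:
  assumes y: "y \<in> tree_ball K L"
  shows "(\<Sum>z\<in>tree_ball K L. if tree_adj y z then \<psi> z else 0)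
     = (if y = [] then 0 else \<psi> (tl y)) + (if length y < L then (\<Sum>i<K. \<psi> (i # y)) else 0)"
proof -
  define P where "P = (if y = [] then {} else {tl y})"
  define C where "C = (if length y < L then (\<lambda>i. i # y) ` {..<K} else {})"
  have eq: "{z\<in>tree_ball K L. tree_adj y z} = P \<union> C"
  proof (intro set_eqI iffI)
    fix z assume "z \<in> {z\<in>tree_ball K L. tree_adj y z}"
    then obtain i where "z \<in> tree_ball K L" "z = i # y \<or> y = i # z"
      by (auto simp: tree_adj_def)
    then show "z \<in> P \<union> C" using y
      by (auto simp: P_def C_def tree_ball_def)
  next
    fix z assume "z \<in> P \<union> C"
    then show "z \<in> {z\<in>tree_ball K L. tree_adj y z}" using y
      by (cases y) (auto simp: P_def C_def tree_ball_def tree_adj_def split: if_splits)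
  qed
  have "(\<Sum>z\<in>tree_ball K L. if tree_adj y z then \<psi> z else 0) = sum \<psi> {z\<in>tree_ball K L. tree_adj y z}"
    by (simp add: sum.inter_filter finite_tree_ball)
  also have "\<dots> = sum \<psi> P + sum \<psi> C"
    unfolding eq by (rule sum.union_disjoint) (auto simp: P_def C_def dest: arg_cong[of _ _ length])
  also have "sum \<psi> P = (if y = [] then 0 else \<psi> (tl y))" by (simp add: P_def)
  also have "sum \<psi> C = (if length y < L then (\<Sum>i<K. \<psi> (i # y)) else 0)"
    by (simp add: C_def sum.reindex inj_on_def)
  finally show ?thesis .
qed

lemma ham_tree_ball:
  assumes "y \<in> tree_ball K L"
  shows "ham K L b \<omega> \<psi> y =
    (if y = [] then 0 else \<psi> (tl y)) + (if length y < L then (\<Sum>i<K. \<psi> (i # y)) else 0)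
    + \<omega> y * \<psi> y + (if length y = L then b * \<psi> y else 0)"
  unfolding ham_def sum_tree_adj[OF assms] by (simp add: tree_dist0_def)

lemma ham_diff: "ham K L b \<omega> (\<lambda>y. f y - g y) y = ham K L b \<omega> f y - ham K L b \<omega> g y"
proof -
  have "(\<Sum>z\<in>tree_ball K L. if tree_adj y z then f z - g z else 0) =
    (\<Sum>z\<in>tree_ball K L. (if tree_adj y z then f z else 0) - (if tree_adj y z then g z else 0))"
    by (rule sum.cong) auto
  then show ?thesis unfolding ham_def by (simp add: sum_subtractf algebra_simps)
qed

text \<open>A solution of \<open>(H - E) \<phi> = 0\<close> is determined from the leaves upwards:
  \<open>\<phi>\<close> at a vertex is \<open>-\<Gamma>\<close> times \<open>\<phi>\<close> at its parent, and at the root this forces \<open>\<phi> = 0\<close>.\<close>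

lemma homogeneous_parent_relation:
  assumes ns: "nonsingular K L b E \<omega>"
    and hom: "\<forall>y\<in>tree_ball K L. ham K L b \<omega> \<phi> y - E * \<phi> y = 0"
    and y: "y \<in> tree_ball K L"
  shows "(if y = [] then 0 else \<phi> (tl y)) + subtree_denom K b E \<omega> (L - length y) y * \<phi> y = 0"
proof -
  have "length y + n = L \<Longrightarrow> y \<in> tree_ball K L \<Longrightarrow>
      (if y = [] then 0 else \<phi> (tl y)) + subtree_denom K b E \<omega> n y * \<phi> y = 0" for n
  proof (induction n arbitrary: y)
    case 0
    then show ?case using hom ham_tree_ball[OF "0.prems"(2), of b \<omega> \<phi>]
      by (auto simp: subtree_denom_def subtree_offset_def algebra_simps)
  next
    case (Suc m)
    have child: "\<phi> (i # y) = - subtree_green K b E \<omega> m (i # y) * \<phi> y" if "i < K" for i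
    proof -
      have c: "i # y \<in> tree_ball K L" "length (i # y) + m = L"
        using Cons_in_tree_ball[OF Suc.prems(2) _ that] Suc.prems(1) by auto
      have "\<phi> y + subtree_denom K b E \<omega> m (i # y) * \<phi> (i # y) = 0"
        using Suc.IH[OF c(2,1)] by simp
      moreover have "subtree_green K b E \<omega> m (i # y) * subtree_denom K b E \<omega> m (i # y) = 1"
        using nonsingular_green_mult_denom[OF ns c(1)] c(2) by (metis add_diff_cancel_left')
      ultimately show ?thesis by algebra
    qed
    have "(\<Sum>i<K. \<phi> (i # y)) = - (\<Sum>i<K. subtree_green K b E \<omega> m (i # y)) * \<phi> y"
      by (simp add: child sum_distrib_right sum_negf)
    then show ?case using hom Suc.prems ham_tree_ball[OF Suc.prems(2), of b \<omega> \<phi>]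
      by (auto simp: subtree_denom_def subtree_offset_def algebra_simps)
  qed
  with y show ?thesis by (simp add: length_le_tree_ball)
qed

lemma homogeneous_solution_eq_0:
  assumes ns: "nonsingular K L b E \<omega>"
    and supp: "\<forall>y. y \<notin> tree_ball K L \<longrightarrow> \<phi> y = 0"
    and hom: "\<forall>y\<in>tree_ball K L. ham K L b \<omega> \<phi> y - E * \<phi> y = 0"
  shows "\<phi> y = 0"
proof (cases "y \<in> tree_ball K L")
  case False
  then show ?thesis using supp by simp
next
  case True
  have denom: "subtree_denom K b E \<omega> (L - length z) z \<noteq> 0" if "z \<in> tree_ball K L" for z
    using ns that unfolding nonsingular_def by blast
  from True show ?thesis
  proof (induction y)
    case Nil
    then show ?case
      using homogeneous_parent_relation[OF ns hom Nil] denom[OF Nil] by simp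
  next
    case (Cons i z)
    have "z \<in> tree_ball K L" using Cons.prems by (simp add: tree_ball_def)
    then have "\<phi> z = 0" by (rule Cons.IH)
    then show ?case
      using homogeneous_parent_relation[OF ns hom Cons.prems] denom[OF Cons.prems] by simp
  qed
qed

lemma green_eqI:
  assumes ns: "nonsingular K L b E \<omega>"
    and supp: "\<forall>y. y \<notin> tree_ball K L \<longrightarrow> \<psi> y = 0"
    and eq: "\<forall>y\<in>tree_ball K L. ham K L b \<omega> \<psi> y - E * \<psi> y = (if y = x then 1 else 0)"
  shows "green K L b \<omega> E x = \<psi> []"
proof -
  let ?solves = "\<lambda>\<phi>. (\<forall>y. y \<notin> tree_ball K L \<longrightarrow> \<phi> y = 0) \<and>
    (\<forall>y\<in>tree_ball K L. ham K L b \<omega> \<phi> y - E * \<phi> y = (if y = x then 1 else 0))"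
  have unique: "\<phi> = \<psi>" if "?solves \<phi>" for \<phi>
  proof
    fix y
    have "(\<lambda>y. \<phi> y - \<psi> y) y = 0"
    proof (rule homogeneous_solution_eq_0[OF ns])
      show "\<forall>y. y \<notin> tree_ball K L \<longrightarrow> \<phi> y - \<psi> y = 0" using that supp by simp
      show "\<forall>y\<in>tree_ball K L. ham K L b \<omega> (\<lambda>y. \<phi> y - \<psi> y) y - E * (\<phi> y - \<psi> y) = 0"
      proof
        fix y assume "y \<in> tree_ball K L"
        then have "ham K L b \<omega> \<phi> y - E * \<phi> y = ham K L b \<omega> \<psi> y - E * \<psi> y"
          using that eq by simp
        then show "ham K L b \<omega> (\<lambda>y. \<phi> y - \<psi> y) y - E * (\<phi> y - \<psi> y) = 0"
          by (simp add: ham_diff algebra_simps)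
      qed
    qed
    then show "\<phi> y = \<psi> y" by simp
  qed
  have "?solves \<psi>" using supp eq by blast
  then have "(THE \<phi>. ?solves \<phi>) = \<psi>" using unique by (rule the_equality)
  then show ?thesis by (simp add: green_def)
qed

text \<open>Children are prepended, so the ancestors of \<open>x\<close> are its suffixes; \<open>ancestor x j\<close> is the one
  at depth \<open>j\<close>.\<close>

definition ancestor :: "nat list \<Rightarrow> nat \<Rightarrow> nat list" where
  "ancestor x j = drop (length x - j) x"

lemma length_ancestor: "j \<le> length x \<Longrightarrow> length (ancestor x j) = j"
  by (simp add: ancestor_def)

lemma ancestor_length [simp]: "ancestor x (length x) = x"
  by (simp add: ancestor_def)

lemma suffix_ancestor: "suffix (ancestor x j) x"
  by (simp add: ancestor_def suffix_drop)

lemma suffix_eq_ancestor: "suffix y x \<Longrightarrow> y = ancestor x (length y)"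
  by (auto simp: suffix_def ancestor_def)

lemma ancestor_Suc: "j < length x \<Longrightarrow> ancestor x (Suc j) = x ! (length x - Suc j) # ancestor x j"
  using Cons_nth_drop_Suc[of "length x - Suc j" x] by (simp add: ancestor_def Suc_diff_Suc)

lemma ancestor_in_tree_ball: "x \<in> tree_ball K L \<Longrightarrow> ancestor x j \<in> tree_ball K L"
  using suffix_ancestor suffix_in_tree_ball by blast

text \<open>\<open>continuant a (Suc j)\<close> is the \<open>j\<close>-th solution value of the three-term recurrence
  \<open>u (j - 1) + a j * u j + u (j + 1) = 0\<close> started from \<open>u (-1) = 0\<close>, \<open>u 0 = 1\<close>.\<close>

fun continuant :: "(nat \<Rightarrow> real) \<Rightarrow> nat \<Rightarrow> real" where
  "continuant a 0 = 0"
| "continuant a (Suc 0) = 1"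
| "continuant a (Suc (Suc j)) = - continuant a j - a j * continuant a (Suc j)"

lemma continuant_identity:
  fixes d g :: "nat \<Rightarrow> real"
  assumes "\<And>i. i \<le> j \<Longrightarrow> g i * d i = 1"
  shows "continuant (\<lambda>i. d i + g (Suc i)) j + d j * continuant (\<lambda>i. d i + g (Suc i)) (Suc j)
    = (-1) ^ j * (\<Prod>i\<le>j. d i)"
  using assms
proof (induction j)
  case 0
  then show ?case by simp
next
  case (Suc j)
  let ?c = "continuant (\<lambda>i. d i + g (Suc i))"
  have "?c (Suc j) + d (Suc j) * ?c (Suc (Suc j))
      = - d (Suc j) * (?c j + d j * ?c (Suc j)) + ?c (Suc j) * (1 - g (Suc j) * d (Suc j))"
    by (simp add: algebra_simps)
  also have "\<dots> = (-1) ^ Suc j * (\<Prod>i\<le>Suc j. d i)"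
    using Suc by (simp add: algebra_simps)
  finally show ?case .
qed

text \<open>The solution of \<open>(H - E) \<psi> = \<delta>\<^sub>x\<close>: off the path from the root to \<open>x\<close> it is
  \<open>-\<Gamma>\<close> times its value at the parent, and along the path it follows the continuant
  recurrence, normalised so that the equation at \<open>x\<close> holds.\<close>

locale green_path =
  fixes K L :: nat and b E :: real and \<omega> :: "nat list \<Rightarrow> real" and x :: "nat list"
  assumes x_in_tree_ball: "x \<in> tree_ball K L"
    and nonsingular: "nonsingular K L b E \<omega>"
begin

abbreviation \<Gamma> :: "nat list \<Rightarrow> real" where
  "\<Gamma> y \<equiv> subtree_green K b E \<omega> (L - length y) y"

abbreviation D :: "nat list \<Rightarrow> real" where
  "D y \<equiv> subtree_denom K b E \<omega> (L - length y) y"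

definition path_green :: "nat \<Rightarrow> real" where
  "path_green j = subtree_green K b E \<omega> (L - j) (ancestor x j)"

definition path_denom :: "nat \<Rightarrow> real" where
  "path_denom j = subtree_denom K b E \<omega> (L - j) (ancestor x j)"

definition path_coeff :: "nat \<Rightarrow> real" where
  "path_coeff j = path_denom j + path_green (Suc j)"

definition scale :: real where
  "scale = 1 / ((-1) ^ length x * (\<Prod>j\<le>length x. path_denom j))"

fun sol :: "nat list \<Rightarrow> real" where
  "sol [] = scale * continuant path_coeff 1"
| "sol (i # z) =
    (if suffix (i # z) x then scale * continuant path_coeff (Suc (Suc (length z)))
     else - \<Gamma> (i # z) * sol z)"

declare sol.simps [simp del]

definition solution :: "nat list \<Rightarrow> real" where
  "solution y = (if y \<in> tree_ball K L then sol y else 0)"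

lemma \<Gamma>_mult_D: "y \<in> tree_ball K L \<Longrightarrow> \<Gamma> y * D y = 1"
  using nonsingular by (rule nonsingular_green_mult_denom)

lemma path_green_mult_denom: "j \<le> length x \<Longrightarrow> path_green j * path_denom j = 1"
  using \<Gamma>_mult_D[OF ancestor_in_tree_ball[OF x_in_tree_ball]]
  by (metis length_ancestor path_green_def path_denom_def)

lemma D_ancestor: "j \<le> length x \<Longrightarrow> D (ancestor x j) = path_denom j"
  by (simp add: path_denom_def length_ancestor)

lemma \<Gamma>_ancestor: "j \<le> length x \<Longrightarrow> \<Gamma> (ancestor x j) = path_green j"
  by (simp add: path_green_def length_ancestor)

lemma sol_on_path: "suffix y x \<Longrightarrow> sol y = scale * continuant path_coeff (Suc (length y))"
  by (cases y) (auto simp: sol.simps)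

lemma sol_off_path: "\<not> suffix (i # y) x \<Longrightarrow> sol (i # y) = - \<Gamma> (i # y) * sol y"
  by (simp add: sol.simps)

lemma parent_on_path:
  "suffix y x \<Longrightarrow> (if y = [] then 0 else sol (tl y)) = scale * continuant path_coeff (length y)"
  by (cases y) (auto dest: suffix_ConsD simp: sol_on_path)

lemma ham_solution:
  assumes y: "y \<in> tree_ball K L"
  shows "ham K L b \<omega> solution y - E * solution y =
    (if y = [] then 0 else sol (tl y)) + D y * sol y
    + (if length y < L then \<Sum>i<K. sol (i # y) + \<Gamma> (i # y) * sol y else 0)"
proof -
  have children: "(\<Sum>i<K. solution (i # y)) = (\<Sum>i<K. sol (i # y))" if "length y < L"
    using Cons_in_tree_ball[OF y that] by (intro sum.cong) (auto simp: solution_def)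
  have parent: "(if y = [] then 0 else solution (tl y)) = (if y = [] then 0 else sol (tl y))"
    using y by (cases y) (auto simp: solution_def tree_ball_def)
  have "ham K L b \<omega> solution y - E * solution y =
      (if y = [] then 0 else sol (tl y)) + (if length y < L then \<Sum>i<K. sol (i # y) else 0)
      + (\<omega> y - E + (if length y = L then b else 0)) * sol y"
    using y children unfolding ham_tree_ball[OF y] parent by (simp add: solution_def algebra_simps)
  also have "\<omega> y - E + (if length y = L then b else 0)
      = D y + (if length y < L then \<Sum>i<K. \<Gamma> (i # y) else 0)"
    using subtree_denom_expand[OF length_le_tree_ball[OF y], of K b E \<omega>] by simp
  finally show ?thesis
    by (cases "length y < L") (simp_all add: sum.distrib sum_distrib_left algebra_simps)
qed

lemma equation_off_path:
  assumes y: "y \<in> tree_ball K L" and off: "\<not> suffix y x"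
  shows "ham K L b \<omega> solution y - E * solution y = 0"
proof -
  obtain i z where yz: "y = i # z" using off by (cases y) auto
  have "\<not> suffix (j # y) x" for j using off suffix_ConsD[of j y x] by blast
  then have children: "(\<Sum>j<K. sol (j # y) + \<Gamma> (j # y) * sol y) = 0"
    by (simp add: sol_off_path)
  have sol_y: "sol y = - \<Gamma> y * sol z" using off sol_off_path by (simp add: yz)
  have parent: "(if y = [] then 0 else sol (tl y)) = sol z" by (simp add: yz)
  have "ham K L b \<omega> solution y - E * solution y = sol z + D y * sol y"
    unfolding ham_solution[OF y] children parent by simp
  also have "\<dots> = sol z * (1 - \<Gamma> y * D y)" by (simp add: sol_y algebra_simps)
  also have "\<dots> = 0" using \<Gamma>_mult_D[OF y] by simp
  finally show ?thesis .
qed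

lemma equation_at_x: "ham K L b \<omega> solution x - E * solution x = 1"
proof -
  have "\<not> suffix (i # x) x" for i using suffix_length_le by fastforce
  then have "(\<Sum>i<K. sol (i # x) + \<Gamma> (i # x) * sol x) = 0"
    by (simp add: sol_off_path)
  then have "ham K L b \<omega> solution x - E * solution x
      = scale * (continuant path_coeff (length x)
                 + path_denom (length x) * continuant path_coeff (Suc (length x)))"
    using D_ancestor[of "length x"]
    by (simp add: ham_solution[OF x_in_tree_ball] parent_on_path sol_on_path algebra_simps)
  also have "\<dots> = scale * ((-1) ^ length x * (\<Prod>j\<le>length x. path_denom j))"
    using continuant_identity[of "length x" path_green path_denom] path_green_mult_denom
    by (simp add: path_coeff_def[abs_def])
  also have "\<dots> = 1"
  proof -
    have "path_denom j \<noteq> 0" if "j \<le> length x" for j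
      using path_green_mult_denom[OF that] by auto
    then have "(\<Prod>j\<le>length x. path_denom j) \<noteq> 0" by simp
    then show ?thesis by (simp add: scale_def)
  qed
  finally show ?thesis .
qed

lemma equation_on_path:
  assumes on: "suffix y x" and ne: "y \<noteq> x"
  shows "ham K L b \<omega> solution y - E * solution y = 0"
proof -
  define j where "j = length y"
  have y_eq: "y = ancestor x j" using suffix_eq_ancestor[OF on] by (simp add: j_def)
  have j: "j < length x"
    using suffix_length_le[OF on] ne y_eq j_def by (metis ancestor_length le_neq_implies_less)
  have y: "y \<in> tree_ball K L" using on x_in_tree_ball by (rule suffix_in_tree_ball)
  have jL: "length y < L" using j length_le_tree_ball[OF x_in_tree_ball] by (simp add: j_def)
  define i0 where "i0 = x ! (length x - Suc j)"
  have "i0 \<in> set x" using j by (simp add: i0_def)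
  then have i0: "i0 < K" using x_in_tree_ball by (auto simp: tree_ball_def)
  have path_child: "i0 # y = ancestor x (Suc j)" using ancestor_Suc[OF j] by (simp add: y_eq i0_def)
  have off: "\<not> suffix (i # y) x" if "i \<noteq> i0" for i
  proof
    assume "suffix (i # y) x"
    then have "i # y = i0 # y" using suffix_eq_ancestor[of "i # y" x] path_child by (simp add: j_def)
    with that show False by simp
  qed
  have "(\<Sum>i<K. sol (i # y) + \<Gamma> (i # y) * sol y)
      = (\<Sum>i<K. if i = i0 then sol (i0 # y) + \<Gamma> (i0 # y) * sol y else 0)"
    by (rule sum.cong) (auto simp: sol_off_path off)
  also have "\<dots> = sol (i0 # y) + \<Gamma> (i0 # y) * sol y" using i0 by simp
  also have "\<dots> = scale * (continuant path_coeff (Suc (Suc j))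
                           + path_green (Suc j) * continuant path_coeff (Suc j))"
    using path_child sol_on_path[OF suffix_ancestor[of x "Suc j"]] sol_on_path[OF on]
      \<Gamma>_ancestor[of "Suc j"] j by (simp add: j_def length_ancestor algebra_simps)
  finally have children: "(\<Sum>i<K. sol (i # y) + \<Gamma> (i # y) * sol y)
      = scale * (continuant path_coeff (Suc (Suc j)) + path_green (Suc j) * continuant path_coeff (Suc j))" .
  have Dy: "D y = path_denom j" using D_ancestor[of j] j y_eq by simp
  have "ham K L b \<omega> solution y - E * solution y
      = scale * continuant path_coeff j + path_denom j * (scale * continuant path_coeff (Suc j))
        + scale * (continuant path_coeff (Suc (Suc j)) + path_green (Suc j) * continuant path_coeff (Suc j))"
    unfolding ham_solution[OF y] children using jL
    by (simp add: Dy parent_on_path[OF on] sol_on_path[OF on] j_def)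
  also have "\<dots> = scale * (continuant path_coeff j + path_coeff j * continuant path_coeff (Suc j)
                            + continuant path_coeff (Suc (Suc j)))"
    by (simp add: path_coeff_def algebra_simps)
  also have "\<dots> = 0" by simp
  finally show ?thesis .
qed

lemma green_eq_scale: "green K L b \<omega> E x = scale"
proof -
  have "green K L b \<omega> E x = solution []"
  proof (rule green_eqI[OF nonsingular])
    show "\<forall>y. y \<notin> tree_ball K L \<longrightarrow> solution y = 0" by (simp add: solution_def)
    show "\<forall>y\<in>tree_ball K L. ham K L b \<omega> solution y - E * solution y = (if y = x then 1 else 0)"
      using equation_off_path equation_on_path equation_at_x by auto
  qed
  then show ?thesis by (simp add: solution_def tree_ball_def sol.simps)
qed

lemma scale_eq_prod: "scale = (-1) ^ length x * (\<Prod>j\<le>length x. path_green j)"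
proof -
  have "(\<Prod>j\<le>length x. path_green j) = 1 / (\<Prod>j\<le>length x. path_denom j)"
    by (simp add: path_green_def path_denom_def subtree_green_eq_inverse_denom prod_dividef)
  moreover have "1 / (-1) ^ n = ((-1) ^ n :: real)" for n
    by (cases "even n") simp_all
  ultimately show ?thesis by (simp add: scale_def flip: divide_divide_eq_left)
qed

end

lemma green_eq_path_product:
  assumes "x \<in> tree_ball K L" and "nonsingular K L b E \<omega>"
  shows "green K L b \<omega> E x = (-1) ^ length x * (\<Prod>j\<le>length x. subtree_green K b E \<omega> (L - j) (ancestor x j))"
proof -
  interpret green_path K L b E \<omega> x using assms by unfold_locales
  show ?thesis using green_eq_scale scale_eq_prod by (simp add: path_green_def)
qed

definition path_log_majorant :: "nat \<Rightarrow> nat \<Rightarrow> real \<Rightarrow> real \<Rightarrow> nat list \<Rightarrow> (nat list \<Rightarrow> real) \<Rightarrow> real" where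
  "path_log_majorant K L b E x \<omega> =
     (\<Sum>j\<le>length x. ln (1 + \<bar>\<omega> (ancestor x j)\<bar>) + ln (1 + (\<bar>E\<bar> + \<bar>b\<bar>))
                    + child_log_sum K b E \<omega> (L - j) (ancestor x j))"

lemma ln_abs_green_ge_path_log_majorant:
  assumes "x \<in> tree_ball K L" and ns: "nonsingular K L b E \<omega>"
  shows "- path_log_majorant K L b E x \<omega> \<le> ln \<bar>green K L b \<omega> E x\<bar>"
proof -
  have denom: "subtree_denom K b E \<omega> (L - j) (ancestor x j) \<noteq> 0" if "j \<le> length x" for j
    using ns ancestor_in_tree_ball[OF assms(1), of j] that
    by (auto simp: nonsingular_def length_ancestor)
  have "ln \<bar>green K L b \<omega> E x\<bar> = ln (\<Prod>j\<le>length x. \<bar>subtree_green K b E \<omega> (L - j) (ancestor x j)\<bar>)"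
    by (simp add: green_eq_path_product[OF assms] abs_mult power_abs abs_prod)
  also have "\<dots> = (\<Sum>j\<le>length x. ln \<bar>subtree_green K b E \<omega> (L - j) (ancestor x j)\<bar>)"
    by (rule ln_prod) (use denom in \<open>auto simp: subtree_green_eq_inverse_denom\<close>)
  also have "\<dots> \<ge> (\<Sum>j\<le>length x. - (ln (1 + \<bar>\<omega> (ancestor x j)\<bar>) + ln (1 + (\<bar>E\<bar> + \<bar>b\<bar>))
                    + child_log_sum K b E \<omega> (L - j) (ancestor x j)))"
    using ln_abs_subtree_green_ge[OF denom] by (intro sum_mono) auto
  finally show ?thesis unfolding sum_negf path_log_majorant_def .
qed

section \<open>Single-site estimates\<close>

locale single_site =
  fixes \<rho> :: "real \<Rightarrow> real"
  assumes A1: "assumption_A1 \<rho>"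
begin

definition site_law :: "real measure" where
  "site_law = density lborel (\<lambda>t. ennreal (\<rho> t))"

definition density_bound :: real where
  "density_bound = (SOME C. 0 \<le> C \<and> (\<forall>t. \<rho> t \<le> C))"

definition moment_exponent :: real where
  "moment_exponent = (SOME \<tau>. 0 < \<tau> \<and> integrable lborel (\<lambda>t. \<bar>t\<bar> powr \<tau> * \<rho> t))"

definition moment :: real where
  "moment = (\<integral>t. \<bar>t\<bar> powr moment_exponent * \<rho> t \<partial>lborel)"

lemma measurable_density [measurable]: "\<rho> \<in> borel_measurable borel"
  and density_nonneg: "0 \<le> \<rho> t"
  and density_integral_eq_1: "(\<integral>\<^sup>+ t. ennreal (\<rho> t) \<partial>lborel) = 1"
  using A1 by (simp_all add: assumption_A1_def)

lemma density_bounded: "0 \<le> density_bound" "\<rho> t \<le> density_bound"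
proof -
  obtain C where "\<forall>t. \<rho> t \<le> C" using A1 by (auto simp: assumption_A1_def)
  then have "\<exists>C. 0 \<le> C \<and> (\<forall>t. \<rho> t \<le> C)" by (intro exI[of _ "max 0 C"]) (auto intro: max.coboundedI2)
  from someI_ex[OF this] show "0 \<le> density_bound" "\<rho> t \<le> density_bound"
    unfolding density_bound_def by auto
qed

lemma moment_exponent_pos: "0 < moment_exponent"
  and integrable_moment: "integrable lborel (\<lambda>t. \<bar>t\<bar> powr moment_exponent * \<rho> t)"
proof -
  have "\<exists>\<tau>. 0 < \<tau> \<and> integrable lborel (\<lambda>t. \<bar>t\<bar> powr \<tau> * \<rho> t)"
    using A1 by (auto simp: assumption_A1_def)
  from someI_ex[OF this] show "0 < moment_exponent"
    "integrable lborel (\<lambda>t. \<bar>t\<bar> powr moment_exponent * \<rho> t)"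
    unfolding moment_exponent_def by auto
qed

lemma moment_nonneg: "0 \<le> moment"
  unfolding moment_def by (rule integral_nonneg_AE) (use density_nonneg in auto)

lemma prob_space_site_law: "prob_space site_law"
  by (rule prob_spaceI) (simp add: site_law_def emeasure_density density_integral_eq_1)

lemma space_site_law [simp]: "space site_law = UNIV"
  and sets_site_law [simp]: "sets site_law = sets borel"
  by (simp_all add: site_law_def)

lemma nn_integral_site_law:
  "f \<in> borel_measurable borel \<Longrightarrow> (\<integral>\<^sup>+w. f w \<partial>site_law) = (\<integral>\<^sup>+w. ennreal (\<rho> w) * f w \<partial>lborel)"
  unfolding site_law_def by (subst nn_integral_density) auto

lemma nn_integral_site_law_one_plus:
  assumes [measurable]: "f \<in> borel_measurable borel"
  shows "(\<integral>\<^sup>+w. 1 + c * f w \<partial>site_law) = 1 + c * (\<integral>\<^sup>+w. f w \<partial>site_law)"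
proof -
  interpret prob_space site_law by (rule prob_space_site_law)
  have [measurable]: "f \<in> borel_measurable site_law"
    by (subst measurable_cong_sets[OF sets_site_law refl]) (rule assms)
  have "(\<integral>\<^sup>+w. 1 + c * f w \<partial>site_law) = (\<integral>\<^sup>+w. 1 \<partial>site_law) + (\<integral>\<^sup>+w. c * f w \<partial>site_law)"
    by (rule nn_integral_add) auto
  also have "(\<integral>\<^sup>+w. c * f w \<partial>site_law) = c * (\<integral>\<^sup>+w. f w \<partial>site_law)"
    by (rule nn_integral_cmult) simp
  finally show ?thesis using emeasure_space_1 by simp
qed

lemma nn_integral_inverse_sqrt_site_law:
  "(\<integral>\<^sup>+w. ennreal (\<bar>1 / (w - a)\<bar> powr (1/2)) \<partial>site_law) \<le> ennreal (1 + 4 * density_bound)"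
proof -
  define h where "h u = ennreal (indicator {-1..1} u * \<bar>1/u\<bar> powr (1/2))" for u :: real
  have h_meas [measurable]: "h \<in> borel_measurable borel" unfolding h_def by measurable
  have pointwise: "ennreal (\<rho> w) * ennreal (\<bar>1 / (w - a)\<bar> powr (1/2))
      \<le> ennreal (\<rho> w) + ennreal density_bound * h (w - a)" for w
  proof (cases "\<bar>w - a\<bar> \<le> 1")
    case True
    have "ennreal (\<rho> w) * ennreal (\<bar>1 / (w - a)\<bar> powr (1/2)) \<le> ennreal density_bound * h (w - a)"
      using True density_bounded density_nonneg
      by (auto simp: h_def indicator_def ennreal_mult[symmetric] intro!: ennreal_leI mult_right_mono)
    then show ?thesis by (simp add: add_increasing)
  next
    case False
    then have "\<bar>1 / (w - a)\<bar> \<le> 1" by (simp add: abs_div)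
    then have "\<bar>1 / (w - a)\<bar> powr (1/2) \<le> 1" using powr_mono2[of "1/2" "\<bar>1 / (w - a)\<bar>" 1] by simp
    then have "ennreal (\<rho> w) * ennreal (\<bar>1 / (w - a)\<bar> powr (1/2)) \<le> ennreal (\<rho> w)"
      using density_nonneg by (simp add: ennreal_mult[symmetric] ennreal_leI mult_left_le)
    then show ?thesis by (simp add: add_increasing2)
  qed
  have "(\<integral>\<^sup>+w. ennreal (\<bar>1 / (w - a)\<bar> powr (1/2)) \<partial>site_law)
      = (\<integral>\<^sup>+w. ennreal (\<rho> w) * ennreal (\<bar>1 / (w - a)\<bar> powr (1/2)) \<partial>lborel)"
    by (rule nn_integral_site_law) measurable
  also have "\<dots> \<le> (\<integral>\<^sup>+w. ennreal (\<rho> w) + ennreal density_bound * h (w - a) \<partial>lborel)"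
    by (rule nn_integral_mono) (rule pointwise)
  also have "\<dots> = 1 + ennreal density_bound * (\<integral>\<^sup>+w. h (w - a) \<partial>lborel)"
    by (subst nn_integral_add) (auto simp: nn_integral_cmult density_integral_eq_1)
  also have "(\<integral>\<^sup>+w. h (w - a) \<partial>lborel) = (\<integral>\<^sup>+w. h w \<partial>lborel)"
    using nn_integral_real_affine[OF h_meas, of 1 "-a"] by simp
  also have "1 + ennreal density_bound * (\<integral>\<^sup>+w. h w \<partial>lborel) \<le> 1 + ennreal density_bound * 4"
    unfolding h_def by (intro add_left_mono mult_left_mono nn_integral_inverse_sqrt_le) simp
  also have "\<dots> = ennreal (1 + 4 * density_bound)"
    using density_bounded by (simp add: ennreal_mult ennreal_plus[symmetric] mult.commute)
  finally show ?thesis .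
qed

lemma nn_integral_inverse_powr_site_law:
  assumes s: "0 \<le> s" "s \<le> 1/4"
  shows "(\<integral>\<^sup>+w. ennreal (\<bar>1 / (w - a)\<bar> powr s) \<partial>site_law) \<le> ennreal (1 + 2 * s * (1 + 4 * density_bound))"
proof -
  have "(\<integral>\<^sup>+w. ennreal (\<bar>1 / (w - a)\<bar> powr s) \<partial>site_law)
      \<le> (\<integral>\<^sup>+w. 1 + ennreal (2 * s) * ennreal (\<bar>1 / (w - a)\<bar> powr (1/2)) \<partial>site_law)"
  proof (rule nn_integral_mono)
    fix w
    have "ennreal (\<bar>1 / (w - a)\<bar> powr s) \<le> ennreal (1 + 2 * s * \<bar>1 / (w - a)\<bar> powr (1/2))"
      by (rule ennreal_leI) (rule powr_le_one_plus_sqrt[OF s])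
    then show "ennreal (\<bar>1 / (w - a)\<bar> powr s) \<le> 1 + ennreal (2 * s) * ennreal (\<bar>1 / (w - a)\<bar> powr (1/2))"
      using s by (simp add: ennreal_plus ennreal_mult)
  qed
  also have "\<dots> = 1 + ennreal (2 * s) * (\<integral>\<^sup>+w. ennreal (\<bar>1 / (w - a)\<bar> powr (1/2)) \<partial>site_law)"
    by (rule nn_integral_site_law_one_plus) measurable
  also have "\<dots> \<le> 1 + ennreal (2 * s) * ennreal (1 + 4 * density_bound)"
    by (intro add_left_mono mult_left_mono nn_integral_inverse_sqrt_site_law) auto
  also have "\<dots> = ennreal (1 + 2 * s * (1 + 4 * density_bound))"
    using s density_bounded by (simp add: ennreal_plus ennreal_mult)
  finally show ?thesis .
qed

lemma nn_integral_ln_abs_site_law: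
  "(\<integral>\<^sup>+w. ennreal (ln (1 + \<bar>w\<bar>)) \<partial>site_law) \<le> ennreal (1 + moment / moment_exponent)"
proof -
  have "(\<integral>\<^sup>+w. ennreal (ln (1 + \<bar>w\<bar>)) \<partial>site_law)
      \<le> (\<integral>\<^sup>+w. 1 + ennreal (1 / moment_exponent) * ennreal (\<bar>w\<bar> powr moment_exponent) \<partial>site_law)"
  proof (rule nn_integral_mono)
    fix w
    have "ennreal (ln (1 + \<bar>w\<bar>)) \<le> ennreal (1 + 1 / moment_exponent * \<bar>w\<bar> powr moment_exponent)"
      by (rule ennreal_leI) (use ln_one_plus_abs_le_powr[OF moment_exponent_pos, of w] in simp)
    also have "\<dots> = 1 + ennreal (1 / moment_exponent) * ennreal (\<bar>w\<bar> powr moment_exponent)"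
      using moment_exponent_pos by (subst ennreal_plus) (auto simp: ennreal_mult[symmetric])
    finally show "ennreal (ln (1 + \<bar>w\<bar>))
        \<le> 1 + ennreal (1 / moment_exponent) * ennreal (\<bar>w\<bar> powr moment_exponent)" .
  qed
  also have "\<dots> = 1 + ennreal (1 / moment_exponent) * (\<integral>\<^sup>+w. ennreal (\<bar>w\<bar> powr moment_exponent) \<partial>site_law)"
    by (rule nn_integral_site_law_one_plus) measurable
  also have "(\<integral>\<^sup>+w. ennreal (\<bar>w\<bar> powr moment_exponent) \<partial>site_law)
      = (\<integral>\<^sup>+w. ennreal (\<bar>w\<bar> powr moment_exponent * \<rho> w) \<partial>lborel)"
    by (subst nn_integral_site_law) (simp_all add: ennreal_mult density_nonneg mult.commute)
  also have "\<dots> = ennreal moment" unfolding moment_def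
    by (rule nn_integral_eq_integral) (use integrable_moment density_nonneg in auto)
  also have "1 + ennreal (1 / moment_exponent) * ennreal moment = ennreal (1 + moment / moment_exponent)"
    using moment_exponent_pos moment_nonneg by (simp add: ennreal_plus ennreal_mult[symmetric])
  finally show ?thesis .
qed

lemma emeasure_site_law_singleton: "emeasure site_law {a} = 0"
  by (simp add: site_law_def emeasure_density nn_integral_0_iff_AE AE_lborel_singleton)

end

section \<open>Moments of the Green function\<close>

context single_site
begin

abbreviation potential :: "nat \<Rightarrow> nat \<Rightarrow> (nat list \<Rightarrow> real) measure" where
  "potential K L \<equiv> PiM (tree_ball K L) (\<lambda>_. site_law)"

lemma pot_measure_eq_potential: "pot_measure \<rho> K L = potential K L"
  by (simp add: pot_measure_def site_law_def)

lemma prob_space_potential: "prob_space (potential K L)"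
  by (rule prob_space_PiM) (use prob_space_site_law in auto)

lemma measurable_site [measurable]:
  "y \<in> tree_ball K L \<Longrightarrow> (\<lambda>\<omega>. \<omega> y) \<in> borel_measurable (potential K L)"
  using measurable_component_singleton[of y "tree_ball K L" "\<lambda>_. site_law"]
  by (simp add: measurable_cong_sets[OF refl sets_site_law])

lemma measurable_subtree_green:
  "y \<in> tree_ball K L \<Longrightarrow> length y + n = L \<Longrightarrow>
    (\<lambda>\<omega>. subtree_green K b E \<omega> n y) \<in> borel_measurable (potential K L)"
proof (induction n arbitrary: y)
  case 0
  then show ?case by simp
next
  case (Suc n)
  have "(\<lambda>\<omega>. subtree_green K b E \<omega> n (i # y)) \<in> borel_measurable (potential K L)" if "i < K" for i
    by (rule Suc.IH) (use Suc.prems that in \<open>auto simp: tree_ball_def\<close>)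
  then have "(\<lambda>\<omega>. \<Sum>i<K. subtree_green K b E \<omega> n (i # y)) \<in> borel_measurable (potential K L)"
    by (intro borel_measurable_sum) auto
  then show ?case using Suc.prems(1) by simp
qed

lemma measurable_subtree_denom:
  assumes "y \<in> tree_ball K L" and "length y + n = L"
  shows "(\<lambda>\<omega>. subtree_denom K b E \<omega> n y) \<in> borel_measurable (potential K L)"
proof (cases n)
  case 0
  then show ?thesis using assms by (simp add: subtree_denom_def subtree_offset_def)
next
  case (Suc m)
  have "(\<lambda>\<omega>. subtree_green K b E \<omega> m (i # y)) \<in> borel_measurable (potential K L)" if "i < K" for i
    by (rule measurable_subtree_green) (use assms Suc that in \<open>auto simp: tree_ball_def\<close>)
  then have "(\<lambda>\<omega>. \<Sum>i<K. subtree_green K b E \<omega> m (i # y)) \<in> borel_measurable (potential K L)"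
    by (intro borel_measurable_sum) auto
  then show ?thesis using assms Suc by (simp add: subtree_denom_def subtree_offset_def)
qed

lemma nn_integral_potential_le:
  assumes "y \<in> tree_ball K L" and [measurable]: "f \<in> borel_measurable (potential K L)"
    and "\<And>\<omega>. \<omega> \<in> space (potential K L) \<Longrightarrow> (\<integral>\<^sup>+w. f (\<omega> (y := w)) \<partial>site_law) \<le> C"
  shows "(\<integral>\<^sup>+\<omega>. f \<omega> \<partial>potential K L) \<le> C"
proof -
  interpret prob_space "potential K L" by (rule prob_space_potential)
  have "(\<integral>\<^sup>+\<omega>. f \<omega> * 1 \<partial>potential K L) \<le> C * (\<integral>\<^sup>+\<omega>. 1 \<partial>potential K L)"
    by (rule nn_integral_PiM_mult_le[OF prob_space_site_law finite_tree_ball assms(1,2)])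
      (use assms in auto)
  then show ?thesis using emeasure_space_1 by simp
qed

text \<open>Each denominator is \<open>\<omega> y\<close> minus a quantity independent of \<open>\<omega> y\<close>, and single sites
  carry no atoms.\<close>

lemma AE_nonsingular: "AE \<omega> in potential K L. nonsingular K L b E \<omega>"
proof -
  have "AE \<omega> in potential K L. subtree_denom K b E \<omega> (L - length y) y \<noteq> 0"
    if y: "y \<in> tree_ball K L" for y
  proof -
    define n where "n = L - length y"
    have [measurable]: "(\<lambda>\<omega>. subtree_denom K b E \<omega> n y) \<in> borel_measurable (potential K L)"
      by (rule measurable_subtree_denom[OF y]) (use y in \<open>auto simp: n_def tree_ball_def\<close>)
    define f :: "(nat list \<Rightarrow> real) \<Rightarrow> ennreal"
      where "f \<omega> = indicator {\<omega>. subtree_denom K b E \<omega> n y = 0} \<omega>" for \<omega>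
    have [measurable]: "f \<in> borel_measurable (potential K L)" unfolding f_def by measurable
    have "(\<integral>\<^sup>+\<omega>. f \<omega> \<partial>potential K L) \<le> 0"
    proof (rule nn_integral_potential_le[OF y])
      fix \<omega>
      have "(\<lambda>w. f (\<omega> (y := w))) = indicator {subtree_offset K b E \<omega> n y}"
        by (auto simp: f_def subtree_denom_upd_self indicator_def)
      then show "(\<integral>\<^sup>+w. f (\<omega> (y := w)) \<partial>site_law) \<le> 0"
        by (simp add: emeasure_site_law_singleton)
    qed measurable
    then have "(\<integral>\<^sup>+\<omega>. f \<omega> \<partial>potential K L) = 0" by simp
    then have "AE \<omega> in potential K L. f \<omega> = 0"
      by (subst (asm) nn_integral_0_iff_AE) auto
    then show ?thesis by eventually_elim (simp add: f_def n_def indicator_def)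
  qed
  then show ?thesis
    unfolding nonsingular_def by (rule AE_finite_allI[OF finite_tree_ball])
qed

lemma nn_integral_path_product_le:
  assumes s: "0 \<le> s" "s \<le> 1/4" and x: "x \<in> tree_ball K L"
  shows "(\<integral>\<^sup>+\<omega>. (\<Prod>j\<le>length x. ennreal (\<bar>subtree_green K b E \<omega> (L - j) (ancestor x j)\<bar> powr s))
      \<partial>potential K L) \<le> ennreal (1 + 2 * s * (1 + 4 * density_bound)) ^ Suc (length x)"
proof -
  define C where "C = ennreal (1 + 2 * s * (1 + 4 * density_bound))"
  define F where "F j \<omega> = ennreal (\<bar>subtree_green K b E \<omega> (L - j) (ancestor x j)\<bar> powr s)" for j \<omega>
  have anc: "ancestor x j \<in> tree_ball K L" for j by (rule ancestor_in_tree_ball[OF x])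
  have F_meas [measurable]: "F j \<in> borel_measurable (potential K L)" if "j \<le> length x" for j
  proof -
    have [measurable]: "(\<lambda>\<omega>. subtree_green K b E \<omega> (L - j) (ancestor x j)) \<in> borel_measurable (potential K L)"
      by (rule measurable_subtree_green[OF anc])
        (use that length_le_tree_ball[OF x] in \<open>simp add: length_ancestor\<close>)
    show ?thesis unfolding F_def by measurable
  qed
  have "(\<integral>\<^sup>+\<omega>. (\<Prod>j\<in>{k..length x}. F j \<omega>) \<partial>potential K L) \<le> C ^ (Suc (length x) - k)"
    if "k \<le> Suc (length x)" for k
    using that
  proof (induction k rule: inc_induct)
    case base
    interpret prob_space "potential K L" by (rule prob_space_potential)
    show ?case using emeasure_space_1 by simp
  next
    case (step k)
    have k: "k \<le> length x" using step.hyps by simp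
    have deeper_meas: "(\<lambda>\<omega>. \<Prod>j\<in>{Suc k..length x}. F j \<omega>) \<in> borel_measurable (potential K L)"
      by (intro borel_measurable_prod_ennreal) (auto intro: F_meas)
    have deeper_indep: "(\<Prod>j\<in>{Suc k..length x}. F j (\<omega> (ancestor x k := w))) = (\<Prod>j\<in>{Suc k..length x}. F j \<omega>)"
      for \<omega> w
    proof (rule prod.cong)
      fix j assume "j \<in> {Suc k..length x}"
      then have "length (ancestor x k) < length (ancestor x j)" using k by (simp add: length_ancestor)
      then show "F j (\<omega> (ancestor x k := w)) = F j \<omega>" by (simp add: F_def subtree_green_upd_shorter)
    qed simp
    have factor_bound: "(\<integral>\<^sup>+w. F k (\<omega> (ancestor x k := w)) \<partial>site_law) \<le> C" for \<omega>
      using nn_integral_inverse_powr_site_law[OF s] by (simp add: F_def C_def subtree_green_upd_self)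
    have "(\<integral>\<^sup>+\<omega>. (\<Prod>j\<in>{k..length x}. F j \<omega>) \<partial>potential K L)
        = (\<integral>\<^sup>+\<omega>. F k \<omega> * (\<Prod>j\<in>{Suc k..length x}. F j \<omega>) \<partial>potential K L)"
      using k by (simp add: atLeastSucAtMost_greaterThanAtMost prod.atLeast_Suc_atMost)
    also have "\<dots> \<le> C * (\<integral>\<^sup>+\<omega>. (\<Prod>j\<in>{Suc k..length x}. F j \<omega>) \<partial>potential K L)"
      using nn_integral_PiM_mult_le[OF prob_space_site_law finite_tree_ball anc F_meas[OF k]
          deeper_meas deeper_indep factor_bound] .
    also have "\<dots> \<le> C * C ^ (Suc (length x) - Suc k)" by (intro mult_left_mono step.IH) auto
    also have "\<dots> = C ^ (Suc (length x) - k)" using k by (simp add: Suc_diff_le)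
    finally show ?case .
  qed
  from this[of 0] show ?thesis by (simp add: F_def C_def atLeast0AtMost)
qed

lemma ln_fractional_moment_le:
  assumes x: "x \<in> tree_ball K L" and s: "0 < s" "s \<le> 1/4"
  shows "ln (\<integral>\<omega>. \<bar>green K L b \<omega> E x\<bar> powr s \<partial>potential K L)
    \<le> Suc (length x) * (2 * s * (1 + 4 * density_bound))"
proof -
  define C where "C = 1 + 2 * s * (1 + 4 * density_bound)"
  define \<Phi> where "\<Phi> = (\<integral>\<omega>. \<bar>green K L b \<omega> E x\<bar> powr s \<partial>potential K L)"
  have C: "1 \<le> C" using s density_bounded by (simp add: C_def)
  have "\<Phi> \<le> C ^ Suc (length x)"
  proof (cases "integrable (potential K L) (\<lambda>\<omega>. \<bar>green K L b \<omega> E x\<bar> powr s)")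
    case True
    have "ennreal \<Phi> = (\<integral>\<^sup>+\<omega>. ennreal (\<bar>green K L b \<omega> E x\<bar> powr s) \<partial>potential K L)"
      unfolding \<Phi>_def by (rule nn_integral_eq_integral[symmetric]) (use True in auto)
    also have "\<dots> = (\<integral>\<^sup>+\<omega>. (\<Prod>j\<le>length x.
        ennreal (\<bar>subtree_green K b E \<omega> (L - j) (ancestor x j)\<bar> powr s)) \<partial>potential K L)"
    proof (rule nn_integral_cong_AE)
      show "AE \<omega> in potential K L. ennreal (\<bar>green K L b \<omega> E x\<bar> powr s) =
          (\<Prod>j\<le>length x. ennreal (\<bar>subtree_green K b E \<omega> (L - j) (ancestor x j)\<bar> powr s))"
        using AE_nonsingular[of K L b E]
        by eventually_elim
          (simp add: green_eq_path_product[OF x] abs_mult power_abs abs_prod prod_powr_distrib prod_ennreal)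
    qed
    also have "\<dots> \<le> ennreal C ^ Suc (length x)"
      unfolding C_def by (rule nn_integral_path_product_le[OF _ _ x]) (use s in auto)
    also have "\<dots> = ennreal (C ^ Suc (length x))" using C by (intro ennreal_power) simp
    finally show ?thesis using C by (subst (asm) ennreal_le_iff) auto
  next
    case False
    then show ?thesis using C by (simp add: \<Phi>_def not_integrable_integral_eq)
  qed
  moreover have "0 \<le> \<Phi>" unfolding \<Phi>_def by (rule integral_nonneg_AE) auto
  ultimately have "ln \<Phi> \<le> ln (C ^ Suc (length x))"
    using C one_le_power[OF C, of "Suc (length x)"] by (cases "\<Phi> = 0") (auto intro: ln_mono)
  also have "\<dots> = Suc (length x) * ln C" using C by (subst ln_realpow) auto
  also have "\<dots> \<le> Suc (length x) * (C - 1)"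
    using ln_le_minus_one[of C] C by (intro mult_left_mono) auto
  finally show ?thesis by (simp add: \<Phi>_def C_def)
qed

lemma integrable_ln_site:
  assumes y: "y \<in> tree_ball K L"
  shows "integrable (potential K L) (\<lambda>\<omega>. ln (1 + \<bar>\<omega> y\<bar>))"
    and "(\<integral>\<omega>. ln (1 + \<bar>\<omega> y\<bar>) \<partial>potential K L) \<le> 1 + moment / moment_exponent"
proof -
  have "(\<integral>\<^sup>+\<omega>. ennreal (ln (1 + \<bar>\<omega> y\<bar>)) \<partial>potential K L) \<le> ennreal (1 + moment / moment_exponent)"
    by (rule nn_integral_potential_le[OF y]) (use y in \<open>auto simp: nn_integral_ln_abs_site_law\<close>)
  from integrable_nonneg_nn_integral_le[OF _ _ this] y moment_nonneg moment_exponent_pos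
  show "integrable (potential K L) (\<lambda>\<omega>. ln (1 + \<bar>\<omega> y\<bar>))"
    and "(\<integral>\<omega>. ln (1 + \<bar>\<omega> y\<bar>) \<partial>potential K L) \<le> 1 + moment / moment_exponent"
    by auto
qed

lemma integrable_ln_subtree_green:
  assumes y: "y \<in> tree_ball K L" and n: "length y + n = L"
  shows "integrable (potential K L) (\<lambda>\<omega>. ln (1 + \<bar>subtree_green K b E \<omega> n y\<bar>))"
    and "(\<integral>\<omega>. ln (1 + \<bar>subtree_green K b E \<omega> n y\<bar>) \<partial>potential K L) \<le> 2 * (1 + 4 * density_bound)"
proof -
  have [measurable]: "(\<lambda>\<omega>. subtree_green K b E \<omega> n y) \<in> borel_measurable (potential K L)"
    by (rule measurable_subtree_green[OF y n])
  have "(\<integral>\<^sup>+\<omega>. ennreal (ln (1 + \<bar>subtree_green K b E \<omega> n y\<bar>)) \<partial>potential K L)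
      \<le> ennreal (2 * (1 + 4 * density_bound))"
  proof (rule nn_integral_potential_le[OF y])
    fix \<omega>
    define c where "c = subtree_offset K b E \<omega> n y"
    have "(\<integral>\<^sup>+w. ennreal (ln (1 + \<bar>subtree_green K b E (\<omega> (y := w)) n y\<bar>)) \<partial>site_law)
        \<le> (\<integral>\<^sup>+w. ennreal 2 * ennreal (\<bar>1 / (w - c)\<bar> powr (1/2)) \<partial>site_law)"
    proof (rule nn_integral_mono)
      fix w
      have "ennreal (ln (1 + \<bar>1 / (w - c)\<bar>)) \<le> ennreal (2 * \<bar>1 / (w - c)\<bar> powr (1/2))"
        by (rule ennreal_leI) (rule ln_one_plus_abs_le_sqrt)
      then show "ennreal (ln (1 + \<bar>subtree_green K b E (\<omega> (y := w)) n y\<bar>))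
          \<le> ennreal 2 * ennreal (\<bar>1 / (w - c)\<bar> powr (1/2))"
        by (simp add: subtree_green_upd_self c_def ennreal_mult)
    qed
    also have "\<dots> = ennreal 2 * (\<integral>\<^sup>+w. ennreal (\<bar>1 / (w - c)\<bar> powr (1/2)) \<partial>site_law)"
      by (rule nn_integral_cmult) (simp add: measurable_cong_sets[OF sets_site_law refl])
    also have "\<dots> \<le> ennreal 2 * ennreal (1 + 4 * density_bound)"
      by (intro mult_left_mono nn_integral_inverse_sqrt_site_law) auto
    finally show "(\<integral>\<^sup>+w. ennreal (ln (1 + \<bar>subtree_green K b E (\<omega> (y := w)) n y\<bar>)) \<partial>site_law)
        \<le> ennreal (2 * (1 + 4 * density_bound))"
      using density_bounded by (simp add: ennreal_mult)
  qed measurable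
  from integrable_nonneg_nn_integral_le[OF _ _ this] density_bounded
  show "integrable (potential K L) (\<lambda>\<omega>. ln (1 + \<bar>subtree_green K b E \<omega> n y\<bar>))"
    and "(\<integral>\<omega>. ln (1 + \<bar>subtree_green K b E \<omega> n y\<bar>) \<partial>potential K L) \<le> 2 * (1 + 4 * density_bound)"
    by auto
qed

lemma integrable_child_log_sum:
  assumes y: "y \<in> tree_ball K L" and n: "length y + n = L"
  shows "integrable (potential K L) (\<lambda>\<omega>. child_log_sum K b E \<omega> n y)"
    and "(\<integral>\<omega>. child_log_sum K b E \<omega> n y \<partial>potential K L) \<le> K * (2 * (1 + 4 * density_bound))"
proof (atomize (full), cases n)
  case 0
  then show "integrable (potential K L) (\<lambda>\<omega>. child_log_sum K b E \<omega> n y)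
      \<and> (\<integral>\<omega>. child_log_sum K b E \<omega> n y \<partial>potential K L) \<le> K * (2 * (1 + 4 * density_bound))"
    using density_bounded by (simp add: child_log_sum_def)
next
  case (Suc m)
  have "i # y \<in> tree_ball K L" "length (i # y) + m = L" if "i < K" for i
    using y n Suc that by (auto simp: tree_ball_def)
  with integrable_sum_integral_le[of "{..<K}" "potential K L"
      "\<lambda>i \<omega>. ln (1 + \<bar>subtree_green K b E \<omega> m (i # y)\<bar>)" "2 * (1 + 4 * density_bound)"]
  show "integrable (potential K L) (\<lambda>\<omega>. child_log_sum K b E \<omega> n y)
      \<and> (\<integral>\<omega>. child_log_sum K b E \<omega> n y \<partial>potential K L) \<le> K * (2 * (1 + 4 * density_bound))"
    using integrable_ln_subtree_green by (simp add: child_log_sum_def Suc)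
qed

lemma integrable_path_log_majorant:
  assumes x: "x \<in> tree_ball K L"
  shows "integrable (potential K L) (path_log_majorant K L b E x)"
    and "(\<integral>\<omega>. path_log_majorant K L b E x \<omega> \<partial>potential K L)
      \<le> Suc (length x) * (1 + moment / moment_exponent + ln (1 + (\<bar>E\<bar> + \<bar>b\<bar>))
                           + K * (2 * (1 + 4 * density_bound)))"
proof -
  interpret prob_space "potential K L" by (rule prob_space_potential)
  have anc: "ancestor x j \<in> tree_ball K L" for j by (rule ancestor_in_tree_ball[OF x])
  have depth: "length (ancestor x j) + (L - j) = L" if "j \<le> length x" for j
    using that length_le_tree_ball[OF x] by (simp add: length_ancestor)
  have "integrable (potential K L) (\<lambda>\<omega>. ln (1 + \<bar>\<omega> (ancestor x j)\<bar>) + ln (1 + (\<bar>E\<bar> + \<bar>b\<bar>))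
        + child_log_sum K b E \<omega> (L - j) (ancestor x j))
      \<and> (\<integral>\<omega>. ln (1 + \<bar>\<omega> (ancestor x j)\<bar>) + ln (1 + (\<bar>E\<bar> + \<bar>b\<bar>))
        + child_log_sum K b E \<omega> (L - j) (ancestor x j) \<partial>potential K L)
      \<le> 1 + moment / moment_exponent + ln (1 + (\<bar>E\<bar> + \<bar>b\<bar>)) + K * (2 * (1 + 4 * density_bound))"
    if "j \<le> length x" for j
    using integrable_ln_site[OF anc, of j] integrable_child_log_sum[OF anc depth[OF that], of b E]
    by (simp add: prob_space)
  with integrable_sum_integral_le[of "{..length x}" "potential K L"]
  show "integrable (potential K L) (path_log_majorant K L b E x)"
    and "(\<integral>\<omega>. path_log_majorant K L b E x \<omega> \<partial>potential K L)
      \<le> Suc (length x) * (1 + moment / moment_exponent + ln (1 + (\<bar>E\<bar> + \<bar>b\<bar>))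
                           + K * (2 * (1 + 4 * density_bound)))"
    by (auto simp: path_log_majorant_def[abs_def])
qed

lemma log_moment_ge:
  assumes x: "x \<in> tree_ball K L"
  shows "- (Suc (length x) * (1 + moment / moment_exponent + ln (1 + (\<bar>E\<bar> + \<bar>b\<bar>))
                              + K * (2 * (1 + 4 * density_bound))))
    \<le> (\<integral>\<omega>. ln \<bar>green K L b \<omega> E x\<bar> \<partial>potential K L)"
proof (cases "integrable (potential K L) (\<lambda>\<omega>. ln \<bar>green K L b \<omega> E x\<bar>)")
  case True
  have "(\<integral>\<omega>. - path_log_majorant K L b E x \<omega> \<partial>potential K L)
      \<le> (\<integral>\<omega>. ln \<bar>green K L b \<omega> E x\<bar> \<partial>potential K L)"
    using integrable_path_log_majorant(1)[OF x] True AE_nonsingular[of K L b E]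
    by (intro integral_mono_AE) (auto elim!: eventually_mono intro: ln_abs_green_ge_path_log_majorant[OF x])
  then show ?thesis using integrable_path_log_majorant(2)[OF x, of b E] by simp
next
  case False
  have "0 \<le> 1 + moment / moment_exponent + ln (1 + (\<bar>E\<bar> + \<bar>b\<bar>)) + K * (2 * (1 + 4 * density_bound))"
    using moment_nonneg moment_exponent_pos density_bounded by (intro add_nonneg_nonneg) auto
  then show ?thesis using False by (simp add: not_integrable_integral_eq)
qed

definition moment_constant :: "nat \<Rightarrow> real \<Rightarrow> real" where
  "moment_constant K c = 2 * (1 + 4 * density_bound) * (1 + K) + 1 + moment / moment_exponent + c"

lemma ln_fractional_moment_le_log_moment:
  assumes x: "x \<in> tree_ball K L" and s: "0 < s" "s \<le> 1/4"
  shows "ln (\<integral>\<omega>. \<bar>green K L b \<omega> E x\<bar> powr s \<partial>potential K L)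
    \<le> s * (Suc (length x) * moment_constant K (ln (1 + (\<bar>E\<bar> + \<bar>b\<bar>))))
       + s * (\<integral>\<omega>. ln \<bar>green K L b \<omega> E x\<bar> \<partial>potential K L)"
proof -
  have "- (s * (Suc (length x) * (1 + moment / moment_exponent + ln (1 + (\<bar>E\<bar> + \<bar>b\<bar>))
                                   + K * (2 * (1 + 4 * density_bound)))))
      \<le> s * (\<integral>\<omega>. ln \<bar>green K L b \<omega> E x\<bar> \<partial>potential K L)"
    using mult_left_mono[OF log_moment_ge[OF x, where b = b and E = E], of s] s by simp
  with ln_fractional_moment_le[OF x s, of b E] show ?thesis
    by (simp add: moment_constant_def algebra_simps)
qed

lemma small_s_fractional_moment_le:
  fixes \<epsilon> R :: real
  assumes "0 < \<epsilon>" and R: "\<And>E. E \<in> I \<Longrightarrow> \<bar>E\<bar> \<le> R"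
  shows "\<exists>s\<epsilon>>0. s\<epsilon> < 1/2 \<and>
    (\<forall>s E L x. 0 < s \<and> s < s\<epsilon> \<and> E \<in> I \<and> x \<in> tree_ball K L \<and> 1 \<le> length x \<longrightarrow>
      ln (\<integral>\<omega>. \<bar>green K L b \<omega> E x\<bar> powr s \<partial>potential K L)
        \<le> \<epsilon> * length x + s * (\<integral>\<omega>. ln \<bar>green K L b \<omega> E x\<bar> \<partial>potential K L))"
proof -
  define C where "C = moment_constant K (\<bar>R\<bar> + \<bar>b\<bar>)"
  have "1 \<le> C" using density_bounded moment_nonneg moment_exponent_pos by (simp add: C_def moment_constant_def)
  have "ln (\<integral>\<omega>. \<bar>green K L b \<omega> E x\<bar> powr s \<partial>potential K L)
      \<le> \<epsilon> * length x + s * (\<integral>\<omega>. ln \<bar>green K L b \<omega> E x\<bar> \<partial>potential K L)"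
    if s: "0 < s" "s < min (1/4) (\<epsilon> / (2 * C))" and "E \<in> I" "x \<in> tree_ball K L" "1 \<le> length x"
    for s E L x
  proof -
    have "0 \<le> ln (1 + (\<bar>E\<bar> + \<bar>b\<bar>))" "ln (1 + (\<bar>E\<bar> + \<bar>b\<bar>)) \<le> \<bar>R\<bar> + \<bar>b\<bar>"
      using R[OF \<open>E \<in> I\<close>] ln_add_one_self_le_self[of "\<bar>E\<bar> + \<bar>b\<bar>"] by auto
    then have "s * (Suc (length x) * moment_constant K (ln (1 + (\<bar>E\<bar> + \<bar>b\<bar>)))) \<le> s * (2 * length x * C)"
      using that \<open>1 \<le> C\<close> density_bounded moment_nonneg moment_exponent_pos
      by (intro mult_left_mono mult_mono) (auto simp: C_def moment_constant_def)
    also have "\<dots> = (2 * s * C) * length x" by simp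
    also have "\<dots> \<le> \<epsilon> * length x"
      using s \<open>1 \<le> C\<close> by (intro mult_right_mono) (simp_all add: field_simps)
    finally show ?thesis using ln_fractional_moment_le_log_moment[of x K L s b E] that by simp
  qed
  moreover have "0 < min (1/4) (\<epsilon> / (2 * C))" using \<open>0 < \<epsilon>\<close> \<open>1 \<le> C\<close> by simp
  ultimately show ?thesis by (intro exI[of _ "min (1/4) (\<epsilon> / (2 * C))"]) auto
qed

end

theorem lemma3p4:
  fixes K :: nat and b :: real and \<rho> :: "real \<Rightarrow> real" and I :: "real set"
  assumes "K \<ge> 2"
    and "assumption_A1 \<rho>"
    and "I \<in> sets borel" and "bounded I"
  shows "\<forall>\<epsilon>>0. \<exists>s\<epsilon>. 0 < s\<epsilon> \<and> s\<epsilon> < 1/2 \<and> (\<exists>L\<epsilon>::nat.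
           \<forall>s E L x. 0 < s \<and> s < s\<epsilon> \<and> E \<in> I \<and> L \<ge> L\<epsilon> \<and> x \<in> tree_ball K L
             \<and> tree_dist0 x \<ge> L\<epsilon> \<longrightarrow>
             ln (\<integral>\<omega>. \<bar>green K L b \<omega> E x\<bar> powr s \<partial>pot_measure \<rho> K L)
               \<le> \<epsilon> * real (tree_dist0 x)
                  + s * (\<integral>\<omega>. ln \<bar>green K L b \<omega> E x\<bar> \<partial>pot_measure \<rho> K L))"
proof -
  interpret single_site \<rho> by unfold_locales (rule assms(2))
  obtain R where "\<And>E. E \<in> I \<Longrightarrow> \<bar>E\<bar> \<le> R" using \<open>bounded I\<close> by (auto simp: bounded_iff)
  from small_s_fractional_moment_le[OF _ this, where K = K and b = b] show ?thesis
    unfolding pot_measure_eq_potential tree_dist0_def by (metis One_nat_def)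
qed

end
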